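(* Let $k$ be a commutative ring, $A$ a commutative $k$-algebra, $(A,\mathfrak g_{A/k},\alpha)$ a Lie algebroid, $S^\cdot$ a noetherian graded $\mathfrak g_{A/k}$-algebra which is semi-simple over $\mathfrak g_{A/k}$ with $\bar S^0$ noetherian, and $M^\cdot$ a graded $(S^\cdot,\mathfrak g_{A/k})$-module of finite type over $S^\cdot$ which is semi-simple over $\mathfrak g_{A/k}$. Write $S^\cdot=A\bar S^\cdot\oplus Q$ with $Q$ a (semi-simple) $\mathfrak g_{A/k}$-submodule of $S^\cdot$, and $M^\cdot=A\bar M^\cdot\oplus M_1$ with $M_1$ a $\mathfrak g_{A/k}$-submodule of $M^\cdot$. Then $Q\cdot\bar M^\cdot\subset M_1$.
   Context: A Lie algebroid $(A,\mathfrak g_{A/k},\alpha)$: an $A$-module of finite type $\mathfrak g_{A/k}$ with a $k$-bilinear Lie bracket and a map $\alpha:\mathfrak g_{A/k}\to T_{A/k}$ (the $k$-derivations of $A$) which is a homomorphism of Lie algebras and $A$-modules, with $[\delta,a\eta]=\alpha(\delta)(a)\eta+a[\delta,\eta]$. A $\mathfrak g_{A/k}$-module is an $A$-module $M$ with a $k$-Lie algebra homomorphism $f:\mathfrak g_{A/k}\to\mathrm{End}_k(M)$ satisfying $f(a\delta)(m)=af(\delta)(m)$ and $f(\delta)(am)=\alpha(\delta)(a)m+af(\delta)(m)$; semi-simple means a direct sum of simple $\mathfrak g_{A/k}$-modules. A graded $\mathfrak g_{A/k}$-algebra is a graded commutative $A$-algebra $S^\cdot=\bigoplus_{i\ge0}S^i$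 which is a $\mathfrak g_{A/k}$-module via an $A$-linear Lie algebra homomorphism $\phi:\mathfrak g_{A/k}\to T_{S^\cdot/k}$ preserving each $S^i$. A graded $(S^\cdot,\mathfrak g_{A/k})$-module is a graded $S^\cdot$-module $M^\cdot=\bigoplus_{i\in\mathbb Z}M^i$ which is a $\mathfrak g_{A/k}$-module with $\delta M^i\subset M^i$ and $\delta(sm)=\delta(s)m+s\,\delta m$. Bars denote invariants: $\bar M^\cdot=\{m:\delta m=0\ \forall\delta\in\mathfrak g_{A/k}\}$, similarly $\bar S^\cdot$; $A\bar S^\cdot$ and $A\bar M^\cdot$ are the $A$-submodules they generate, which are $\mathfrak g_{A/k}$-submodules. *)

theory Defs
  imports Complex_Main
begin

text \<open>Base ring k (type 'k), commutative k-algebra A (type 'a) via the structure map iota.\<close>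

definition ring_hom_fun :: "('r::comm_ring_1 \<Rightarrow> 's::comm_ring_1) \<Rightarrow> bool" where
  "ring_hom_fun f \<longleftrightarrow> (\<forall>x y. f (x + y) = f x + f y) \<and> (\<forall>x y. f (x * y) = f x * f y) \<and> f 1 = 1"

definition kder :: "('k::comm_ring_1 \<Rightarrow> 'r::comm_ring_1) \<Rightarrow> ('r \<Rightarrow> 'r) \<Rightarrow> bool" where
  "kder \<iota> D \<longleftrightarrow> (\<forall>x y. D (x + y) = D x + D y) \<and> (\<forall>c x. D (\<iota> c * x) = \<iota> c * D x)
     \<and> (\<forall>x y. D (x * y) = x * D y + y * D x)"

definition lie_algebroid ::
  "('k::comm_ring_1 \<Rightarrow> 'a::comm_ring_1) \<Rightarrow> ('a \<Rightarrow> 'g::ab_group_add \<Rightarrow> 'g) \<Rightarrow> ('g \<Rightarrow> 'g \<Rightarrow> 'g)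
    \<Rightarrow> ('g \<Rightarrow> 'a \<Rightarrow> 'a) \<Rightarrow> bool" where
  "lie_algebroid \<iota> sm br al \<longleftrightarrow>
     ring_hom_fun \<iota> \<and> module sm \<and> (\<exists>G. finite G \<and> module.span sm G = UNIV)
     \<and> (\<forall>x y z. br (x + y) z = br x z + br y z)
     \<and> (\<forall>x y z. br x (y + z) = br x y + br x z)
     \<and> (\<forall>c x y. br (sm (\<iota> c) x) y = sm (\<iota> c) (br x y))
     \<and> (\<forall>c x y. br x (sm (\<iota> c) y) = sm (\<iota> c) (br x y))
     \<and> (\<forall>x. br x x = 0)
     \<and> (\<forall>x y z. br x (br y z) + br y (br z x) + br z (br x y) = 0)
     \<and> (\<forall>d. kder \<iota> (al d))
     \<and> (\<forall>a d b. al (sm a d) b = a * al d b)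
     \<and> (\<forall>d e b. al (d + e) b = al d b + al e b)
     \<and> (\<forall>d e b. al (br d e) b = al d (al e b) - al e (al d b))
     \<and> (\<forall>d a e. br d (sm a e) = sm (al d a) e + sm a (br d e))"

definition gmodule ::
  "('k::comm_ring_1 \<Rightarrow> 'a::comm_ring_1) \<Rightarrow> ('a \<Rightarrow> 'g::ab_group_add \<Rightarrow> 'g) \<Rightarrow> ('g \<Rightarrow> 'g \<Rightarrow> 'g)
    \<Rightarrow> ('g \<Rightarrow> 'a \<Rightarrow> 'a) \<Rightarrow> ('a \<Rightarrow> 'v::ab_group_add \<Rightarrow> 'v) \<Rightarrow> ('g \<Rightarrow> 'v \<Rightarrow> 'v) \<Rightarrow> bool" where
  "gmodule \<iota> sm br al sc act \<longleftrightarrow>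
     module sc
     \<and> (\<forall>d x y. act d (x + y) = act d x + act d y)
     \<and> (\<forall>d c x. act d (sc (\<iota> c) x) = sc (\<iota> c) (act d x))
     \<and> (\<forall>d e x. act (d + e) x = act d x + act e x)
     \<and> (\<forall>d e x. act (br d e) x = act d (act e x) - act e (act d x))
     \<and> (\<forall>a d x. act (sm a d) x = sc a (act d x))
     \<and> (\<forall>d a x. act d (sc a x) = sc (al d a) x + sc a (act d x))"

definition gsubmodule :: "('a::comm_ring_1 \<Rightarrow> 'v::ab_group_add \<Rightarrow> 'v) \<Rightarrow> ('g \<Rightarrow> 'v \<Rightarrow> 'v) \<Rightarrow> 'v set \<Rightarrow> bool" where
  "gsubmodule sc act N \<longleftrightarrow> module.subspace sc N \<and> (\<forall>d. \<forall>x\<in>N. act d x \<in> N)"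

definition gsimple :: "('a::comm_ring_1 \<Rightarrow> 'v::ab_group_add \<Rightarrow> 'v) \<Rightarrow> ('g \<Rightarrow> 'v \<Rightarrow> 'v) \<Rightarrow> 'v set \<Rightarrow> bool" where
  "gsimple sc act N \<longleftrightarrow> gsubmodule sc act N \<and> N \<noteq> {0}
     \<and> (\<forall>N'. gsubmodule sc act N' \<and> N' \<subseteq> N \<longrightarrow> N' = {0} \<or> N' = N)"

definition gsemisimple :: "('a::comm_ring_1 \<Rightarrow> 'v::ab_group_add \<Rightarrow> 'v) \<Rightarrow> ('g \<Rightarrow> 'v \<Rightarrow> 'v) \<Rightarrow> bool" where
  "gsemisimple sc act \<longleftrightarrow> (\<exists>\<N>. (\<forall>N\<in>\<N>. gsimple sc act N)
     \<and> (\<forall>v. \<exists>F x. F \<subseteq> \<N> \<and> finite F \<and> (\<forall>N\<in>F. x N \<in> N) \<and> v = (\<Sum>N\<in>F. x N))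
     \<and> (\<forall>F x. F \<subseteq> \<N> \<and> finite F \<and> (\<forall>N\<in>F. x N \<in> N) \<and> (\<Sum>N\<in>F. x N) = 0
            \<longrightarrow> (\<forall>N\<in>F. x N = 0)))"

definition invariants :: "('g \<Rightarrow> 'v::zero \<Rightarrow> 'v) \<Rightarrow> 'v set" where
  "invariants act = {v. \<forall>d. act d v = 0}"

definition direct_grading :: "('i \<Rightarrow> 'v::ab_group_add set) \<Rightarrow> bool" where
  "direct_grading P \<longleftrightarrow> (\<forall>i. 0 \<in> P i \<and> (\<forall>x\<in>P i. \<forall>y\<in>P i. x + y \<in> P i \<and> - x \<in> P i))
     \<and> (\<forall>v. \<exists>!c. finite {i. c i \<noteq> 0} \<and> (\<forall>i. c i \<in> P i) \<and> v = (\<Sum>i\<in>{i. c i \<noteq> 0}. c i))"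

definition subring_ideal :: "'r::comm_ring_1 set \<Rightarrow> 'r set \<Rightarrow> bool" where
  "subring_ideal R I \<longleftrightarrow> I \<subseteq> R \<and> 0 \<in> I \<and> (\<forall>x\<in>I. \<forall>y\<in>I. x + y \<in> I) \<and> (\<forall>r\<in>R. \<forall>x\<in>I. r * x \<in> I)"

definition is_subring :: "'r::comm_ring_1 set \<Rightarrow> bool" where
  "is_subring R \<longleftrightarrow> 0 \<in> R \<and> 1 \<in> R \<and> (\<forall>x\<in>R. \<forall>y\<in>R. x + y \<in> R \<and> x * y \<in> R \<and> - x \<in> R)"

definition noetherian_subring :: "'r::comm_ring_1 set \<Rightarrow> bool" where
  "noetherian_subring R \<longleftrightarrow> is_subring R \<and> (\<forall>I. subring_ideal R I \<longrightarrow>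
     (\<exists>G. finite G \<and> G \<subseteq> R \<and> I = {\<Sum>g\<in>G. r g * g | r. \<forall>g\<in>G. r g \<in> R}))"

definition graded_galgebra ::
  "('k::comm_ring_1 \<Rightarrow> 'a::comm_ring_1) \<Rightarrow> ('a \<Rightarrow> 'g::ab_group_add \<Rightarrow> 'g) \<Rightarrow> ('g \<Rightarrow> 'g \<Rightarrow> 'g)
    \<Rightarrow> ('g \<Rightarrow> 'a \<Rightarrow> 'a) \<Rightarrow> ('a \<Rightarrow> 's::comm_ring_1) \<Rightarrow> (nat \<Rightarrow> 's set) \<Rightarrow> ('g \<Rightarrow> 's \<Rightarrow> 's) \<Rightarrow> bool" where
  "graded_galgebra \<iota> sm br al j Sg \<phi> \<longleftrightarrow>
     ring_hom_fun j \<and> direct_grading Sg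
     \<and> (\<forall>i k. \<forall>x\<in>Sg i. \<forall>y\<in>Sg k. x * y \<in> Sg (i + k))
     \<and> (\<forall>a i. \<forall>x\<in>Sg i. j a * x \<in> Sg i)
     \<and> (\<forall>d. kder (j \<circ> \<iota>) (\<phi> d))
     \<and> gmodule \<iota> sm br al (\<lambda>a s. j a * s) \<phi>
     \<and> (\<forall>d i. \<forall>x\<in>Sg i. \<phi> d x \<in> Sg i)"

definition graded_Sg_module ::
  "('k::comm_ring_1 \<Rightarrow> 'a::comm_ring_1) \<Rightarrow> ('a \<Rightarrow> 'g::ab_group_add \<Rightarrow> 'g) \<Rightarrow> ('g \<Rightarrow> 'g \<Rightarrow> 'g)
    \<Rightarrow> ('g \<Rightarrow> 'a \<Rightarrow> 'a) \<Rightarrow> ('a \<Rightarrow> 's::comm_ring_1) \<Rightarrow> (nat \<Rightarrow> 's set) \<Rightarrow> ('g \<Rightarrow> 's \<Rightarrow> 's)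
    \<Rightarrow> ('s \<Rightarrow> 'm::ab_group_add \<Rightarrow> 'm) \<Rightarrow> (int \<Rightarrow> 'm set) \<Rightarrow> ('g \<Rightarrow> 'm \<Rightarrow> 'm) \<Rightarrow> bool" where
  "graded_Sg_module \<iota> sm br al j Sg \<phi> smM Mg \<rho> \<longleftrightarrow>
     module smM \<and> direct_grading Mg
     \<and> (\<forall>i n. \<forall>s\<in>Sg i. \<forall>m\<in>Mg n. smM s m \<in> Mg (int i + n))
     \<and> gmodule \<iota> sm br al (\<lambda>a m. smM (j a) m) \<rho>
     \<and> (\<forall>d n. \<forall>m\<in>Mg n. \<rho> d m \<in> Mg n)
     \<and> (\<forall>d s m. \<rho> d (smM s m) = smM (\<phi> d s) m + smM s (\<rho> d m))"

end

theory Submission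
  imports Defs
begin

text \<open>For
  q \<in> Q and an invariant m consider k = p \<circ> (\<lambda>s. s m) \<circ> pQ, where pQ : S \<rightarrow> Q and p,
  onto the span of the invariants of M, are the g-linear projections along the given
  decompositions. Then k is g-linear, kills the invariants of S, takes values in the span
  of the invariants of M, and k q = p (q m). Such a map out of a semisimple module
  vanishes: if k s \<noteq> 0, some simple summand T of M receives a nonzero component, and
  since the image consists of combinations of invariants, T contains a nonzero invariant
  u. A simple summand B of S not killed by k maps isomorphically onto T (Schur), so u
  lifts to an invariant of B, which k kills, a contradiction.\<close>

definition g_linear :: "('a::comm_ring_1 \<Rightarrow> 'v::ab_group_add \<Rightarrow> 'v) \<Rightarrow> ('g \<Rightarrow> 'v \<Rightarrow> 'v)
    \<Rightarrow> ('a \<Rightarrow> 'w::ab_group_add \<Rightarrow> 'w) \<Rightarrow> ('g \<Rightarrow> 'w \<Rightarrow> 'w) \<Rightarrow> ('v \<Rightarrow> 'w) \<Rightarrow> bool" where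
  "g_linear sc1 act1 sc2 act2 f \<longleftrightarrow> (\<forall>x y. f (x + y) = f x + f y)
     \<and> (\<forall>a x. f (sc1 a x) = sc2 a (f x)) \<and> (\<forall>d x. f (act1 d x) = act2 d (f x))"

lemma g_linear_additive: "g_linear sc1 act1 sc2 act2 f \<Longrightarrow> additive f"
  by (simp add: g_linear_def additive_def)

lemma g_linear_zero: "g_linear sc1 act1 sc2 act2 f \<Longrightarrow> f 0 = 0"
  using additive.zero g_linear_additive by blast

lemma g_linear_sum: "g_linear sc1 act1 sc2 act2 f \<Longrightarrow> f (sum g F) = (\<Sum>x\<in>F. f (g x))"
  using additive.sum g_linear_additive by blast

lemma g_linear_act: "g_linear sc1 act1 sc2 act2 f \<Longrightarrow> f (act1 d x) = act2 d (f x)"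
  by (simp add: g_linear_def)

lemma g_linear_comp:
  "g_linear sc1 act1 sc2 act2 f \<Longrightarrow> g_linear sc2 act2 sc3 act3 g \<Longrightarrow> g_linear sc1 act1 sc3 act3 (g \<circ> f)"
  by (simp add: g_linear_def)

definition proj :: "'v::ab_group_add set \<Rightarrow> 'v set \<Rightarrow> 'v \<Rightarrow> 'v" where
  "proj U W v = (SOME x. x \<in> U \<and> v - x \<in> W)"

lemma proj_spec:
  assumes "x \<in> U" "v - x \<in> W"
  shows "proj U W v \<in> U" and "v - proj U W v \<in> W"
  using assms unfolding proj_def by (metis (mono_tags, lifting) someI)+

lemma proj_mem:
  assumes "\<forall>v. \<exists>x\<in>U. \<exists>y\<in>W. v = x + y"
  shows "proj U W v \<in> U" and "v - proj U W v \<in> W"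
proof -
  obtain x y where "x \<in> U" "y \<in> W" "v = x + y"
    using assms by blast
  then show "proj U W v \<in> U" and "v - proj U W v \<in> W"
    using proj_spec[of x U v W] by simp_all
qed

locale g_action = module scale
  for scale :: "'a::comm_ring_1 \<Rightarrow> 'v::ab_group_add \<Rightarrow> 'v" +
  fixes act :: "'g \<Rightarrow> 'v \<Rightarrow> 'v"
  assumes act_add: "act d (x + y) = act d x + act d y"
begin

lemma additive_act: "additive (act d)"
  by (simp add: additive_def act_add)

lemma act_zero [simp]: "act d 0 = 0"
  using additive.zero[OF additive_act] .

lemma act_diff: "act d (x - y) = act d x - act d y"
  using additive.diff[OF additive_act] .

lemma gsubmodule_span_invariants:
  assumes leibniz: "\<And>d a x. act d (scale a x) = scale (al d a) x + scale a (act d x)"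
  shows "gsubmodule scale act (span (invariants act))"
proof -
  let ?U = "span (invariants act)"
  have "x \<in> ?U \<and> (\<forall>d. act d x \<in> ?U)" if "x \<in> ?U" for x
    using that
  proof (induction rule: span_induct)
    case base
    show ?case
      by (auto simp: subspace_def act_add leibniz span_zero span_add span_scale)
  next
    case (step x)
    then show ?case
      by (simp add: invariants_def span_zero span_base)
  qed
  then show ?thesis
    by (simp add: gsubmodule_def)
qed

lemma g_linear_vanishes_on_span:
  assumes "module sc2" "g_linear scale act sc2 act2 f" "\<forall>v\<in>B. f v = 0" "x \<in> span B"
  shows "f x = 0"
  using assms(4)
proof (induction rule: span_induct)
  case base
  show ?case
    using assms(2) g_linear_zero[OF assms(2)] module.scale_zero_right[OF assms(1)]
    by (auto simp: subspace_def g_linear_def)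
next
  case (step x)
  then show ?case
    using assms(3) by blast
qed

lemma gsubmodule_image:
  assumes M2: "module sc2" and f: "g_linear scale act sc2 act2 f" and N: "gsubmodule scale act N"
  shows "gsubmodule sc2 act2 (f ` N)"
proof -
  have sN: "subspace N"
    using N by (simp add: gsubmodule_def)
  have "f 0 \<in> f ` N"
    using sN subspace_0 by blast
  moreover have "f x + f y \<in> f ` N" if "x \<in> N" "y \<in> N" for x y
    using that sN subspace_add f unfolding g_linear_def by (metis image_eqI)
  moreover have "sc2 a (f x) \<in> f ` N" if "x \<in> N" for a x
    using that sN subspace_scale f unfolding g_linear_def by (metis image_eqI)
  moreover have "act2 d (f x) \<in> f ` N" if "x \<in> N" for d x
    using that N f unfolding gsubmodule_def g_linear_def by (metis image_eqI)
  ultimately show ?thesis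
    unfolding gsubmodule_def module.subspace_def[OF M2] g_linear_zero[OF f] by blast
qed

lemma gsubmodule_kernel:
  assumes "g_action sc2 act2" "g_linear scale act sc2 act2 f" "gsubmodule scale act N"
  shows "gsubmodule scale act {x\<in>N. f x = 0}"
  using assms g_linear_zero[OF assms(2)] module.scale_zero_right[OF g_action.axioms(1)[OF assms(1)]]
    g_action.act_zero[OF assms(1)]
  unfolding gsubmodule_def subspace_def g_linear_def by auto

lemma proj_eqI:
  assumes "subspace U" "subspace W" "U \<inter> W = {0}" "x \<in> U" "v - x \<in> W"
  shows "proj U W v = x"
proof -
  note z = proj_spec[OF assms(4,5)]
  have "proj U W v - x \<in> U"
    using z(1) assms(1,4) subspace_diff by blast
  moreover have "proj U W v - x = (v - x) - (v - proj U W v)"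
    by simp
  then have "proj U W v - x \<in> W"
    using z(2) assms(2,5) subspace_diff by metis
  ultimately have "proj U W v - x = 0"
    using assms(3) by blast
  then show ?thesis
    by simp
qed

lemma proj_self: "subspace U \<Longrightarrow> subspace W \<Longrightarrow> U \<inter> W = {0} \<Longrightarrow> v \<in> U \<Longrightarrow> proj U W v = v"
  using proj_eqI subspace_0 by simp

lemma proj_complement: "subspace U \<Longrightarrow> subspace W \<Longrightarrow> U \<inter> W = {0} \<Longrightarrow> v \<in> W \<Longrightarrow> proj U W v = 0"
  using proj_eqI subspace_0 by simp

lemma g_linear_proj:
  assumes U: "gsubmodule scale act U" and W: "gsubmodule scale act W"
    and direct: "U \<inter> W = {0}" "\<forall>v. \<exists>x\<in>U. \<exists>y\<in>W. v = x + y"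
  shows "g_linear scale act scale act (proj U W)"
proof -
  have sU: "subspace U" and sW: "subspace W"
    using U W by (simp_all add: gsubmodule_def)
  note P = proj_mem[OF direct(2)]
  note eqI = proj_eqI[OF sU sW direct(1)]
  have "proj U W (x + y) = proj U W x + proj U W y" for x y
  proof (rule eqI)
    show "proj U W x + proj U W y \<in> U"
      using P sU subspace_add by blast
    have "(x - proj U W x) + (y - proj U W y) \<in> W"
      using P sW subspace_add by blast
    then show "x + y - (proj U W x + proj U W y) \<in> W"
      by (simp add: algebra_simps)
  qed
  moreover have "proj U W (scale a x) = scale a (proj U W x)" for a x
  proof (rule eqI)
    show "scale a (proj U W x) \<in> U"
      using P sU subspace_scale by blast
    have "scale a (x - proj U W x) \<in> W"
      using P sW subspace_scale by blast
    then show "scale a x - scale a (proj U W x) \<in> W"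
      by (simp add: scale_right_diff_distrib)
  qed
  moreover have "proj U W (act d x) = act d (proj U W x)" for d x
  proof (rule eqI)
    show "act d (proj U W x) \<in> U"
      using P U by (simp add: gsubmodule_def)
    have "act d (x - proj U W x) \<in> W"
      using P W by (simp add: gsubmodule_def)
    then show "act d x - act d (proj U W x) \<in> W"
      by (simp add: act_diff)
  qed
  ultimately show ?thesis
    by (simp add: g_linear_def)
qed

end

definition summand_decomp :: "'v::ab_group_add set set \<Rightarrow> 'v \<Rightarrow> 'v set set \<Rightarrow> ('v set \<Rightarrow> 'v) \<Rightarrow> bool" where
  "summand_decomp \<N> v F x \<longleftrightarrow> F \<subseteq> \<N> \<and> finite F \<and> (\<forall>N\<in>F. x N \<in> N) \<and> v = (\<Sum>N\<in>F. x N)"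

definition component :: "'v::ab_group_add set set \<Rightarrow> 'v set \<Rightarrow> 'v \<Rightarrow> 'v" where
  "component \<N> N v = (SOME w. \<exists>F x. summand_decomp \<N> v F x \<and> w = (if N \<in> F then x N else 0))"

locale simple_decomposition = g_action +
  fixes \<N>
  assumes simple: "N \<in> \<N> \<Longrightarrow> gsimple scale act N"
    and spanning: "\<exists>F x. summand_decomp \<N> v F x"
    and independent: "summand_decomp \<N> 0 F x \<Longrightarrow> N \<in> F \<Longrightarrow> x N = 0"

lemma gsemisimple_simple_decomposition:
  assumes "g_action sc act" "gsemisimple sc act"
  obtains \<N> where "simple_decomposition sc act \<N>"
proof -
  from assms(2) obtain \<N> where "\<forall>N\<in>\<N>. gsimple sc act N"
    "\<forall>v. \<exists>F x. summand_decomp \<N> v F x"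
    "\<forall>F x. summand_decomp \<N> 0 F x \<longrightarrow> (\<forall>N\<in>F. x N = 0)"
    unfolding gsemisimple_def summand_decomp_def by (auto simp: eq_commute[of 0])
  then have "simple_decomposition sc act \<N>"
    using assms(1) by (simp add: simple_decomposition_def simple_decomposition_axioms_def)
  then show ?thesis
    using that by blast
qed

context simple_decomposition
begin

lemma summand_gsubmodule: "N \<in> \<N> \<Longrightarrow> gsubmodule scale act N"
  using simple by (simp add: gsimple_def)

lemma summand_subspace: "N \<in> \<N> \<Longrightarrow> subspace N"
  using summand_gsubmodule by (simp add: gsubmodule_def)

lemma summand_decomp_unique:
  assumes "summand_decomp \<N> v F x" "summand_decomp \<N> v G y"
  shows "(if N \<in> F then x N else 0) = (if N \<in> G then y N else 0)"
proof -
  define z where "z = (\<lambda>N. (if N \<in> F then x N else 0) - (if N \<in> G then y N else 0))"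
  have fin: "finite (F \<union> G)" and sub: "F \<union> G \<subseteq> \<N>"
    using assms by (auto simp: summand_decomp_def)
  have "z N \<in> N" if "N \<in> F \<union> G" for N
    using that sub assms summand_subspace[of N] subspace_0 subspace_diff subspace_neg
    by (auto simp: z_def summand_decomp_def)
  moreover have "(\<Sum>N\<in>F \<union> G. z N) = sum x F - sum y G"
    using fin by (simp add: z_def sum_subtractf sum.inter_restrict[symmetric] Int_absorb1)
  then have "(\<Sum>N\<in>F \<union> G. z N) = 0"
    using assms by (simp add: summand_decomp_def)
  ultimately have "summand_decomp \<N> 0 (F \<union> G) z"
    using fin sub by (simp add: summand_decomp_def)
  then have "z N = 0"
    using independent[of "F \<union> G" z N] by (cases "N \<in> F \<union> G") (simp_all add: z_def)
  then show ?thesis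
    by (simp add: z_def)
qed

lemma component_eq:
  assumes "summand_decomp \<N> v F x"
  shows "component \<N> N v = (if N \<in> F then x N else 0)"
proof -
  let ?P = "\<lambda>w. \<exists>G y. summand_decomp \<N> v G y \<and> w = (if N \<in> G then y N else 0)"
  have "?P (if N \<in> F then x N else 0)"
    using assms by blast
  then have "?P (component \<N> N v)"
    unfolding component_def by (rule someI)
  then obtain G y where G: "summand_decomp \<N> v G y"
    and c: "component \<N> N v = (if N \<in> G then y N else 0)"
    by blast
  show ?thesis
    using c summand_decomp_unique[OF G assms] by simp
qed

lemma component_mem: "N \<in> \<N> \<Longrightarrow> component \<N> N v \<in> N"
  using spanning[of v] component_eq summand_subspace subspace_0
  by (fastforce simp: summand_decomp_def)

lemma component_nonzero:
  assumes "v \<noteq> 0"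
  obtains N where "N \<in> \<N>" "component \<N> N v \<noteq> 0"
proof -
  obtain F x where d: "summand_decomp \<N> v F x"
    using spanning by blast
  have "\<exists>N\<in>F. x N \<noteq> 0"
    using d assms unfolding summand_decomp_def by (metis sum.neutral)
  then show ?thesis
    using that d component_eq[OF d] by (auto simp: summand_decomp_def)
qed

lemma component_add: "component \<N> N (v + w) = component \<N> N v + component \<N> N w"
proof -
  obtain F x where dv: "summand_decomp \<N> v F x"
    using spanning by blast
  obtain G y where dw: "summand_decomp \<N> w G y"
    using spanning by blast
  define z where "z = (\<lambda>N. (if N \<in> F then x N else 0) + (if N \<in> G then y N else 0))"
  have fin: "finite (F \<union> G)" and sub: "F \<union> G \<subseteq> \<N>"
    using dv dw by (auto simp: summand_decomp_def)
  have "z N \<in> N" if "N \<in> F \<union> G" for N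
    using that sub dv dw summand_subspace[of N] subspace_0 subspace_add
    by (auto simp: z_def summand_decomp_def)
  moreover have "(\<Sum>N\<in>F \<union> G. z N) = sum x F + sum y G"
    using fin by (simp add: z_def sum.distrib sum.inter_restrict[symmetric] Int_absorb1)
  ultimately have "summand_decomp \<N> (v + w) (F \<union> G) z"
    using fin sub dv dw by (simp add: summand_decomp_def)
  then show ?thesis
    using component_eq[OF dv] component_eq[OF dw] component_eq by (simp add: z_def)
qed

lemma component_commute:
  assumes "additive f" "\<And>N y. N \<in> \<N> \<Longrightarrow> y \<in> N \<Longrightarrow> f y \<in> N"
  shows "component \<N> N (f v) = f (component \<N> N v)"
proof -
  obtain F x where d: "summand_decomp \<N> v F x"
    using spanning by blast
  then have "summand_decomp \<N> (f v) F (f \<circ> x)"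
    using assms additive.sum[OF assms(1)] by (auto simp: summand_decomp_def)
  then show ?thesis
    using component_eq[OF d] component_eq additive.zero[OF assms(1)] by simp
qed

lemma g_linear_component: "g_linear scale act scale act (component \<N> N)"
proof -
  have "additive (scale a)" for a
    by (simp add: additive_def scale_right_distrib)
  then have "component \<N> N (scale a v) = scale a (component \<N> N v)" for a v
    using component_commute summand_subspace subspace_scale by blast
  moreover have "component \<N> N (act d v) = act d (component \<N> N v)" for d v
    using component_commute[OF additive_act] summand_gsubmodule by (simp add: gsubmodule_def)
  ultimately show ?thesis
    by (simp add: g_linear_def component_add)
qed

lemma invariant_lift:
  assumes W: "g_action scW actW" and simple_target: "gsimple scW actW T"
    and h: "g_linear scale act scW actW h" "range h \<subseteq> T" "h s \<noteq> 0"
    and u: "u \<in> T" "u \<in> invariants actW"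
  obtains v where "v \<in> invariants act" "h v = u"
proof -
  obtain F y where s: "summand_decomp \<N> s F y"
    using spanning by blast
  have "h s = (\<Sum>N\<in>F. h (y N))"
    using s g_linear_sum[OF h(1)] by (simp add: summand_decomp_def)
  then obtain B where "B \<in> F" "h (y B) \<noteq> 0"
    using h(3) by (metis sum.neutral)
  then have B: "B \<in> \<N>" "y B \<in> B"
    using s by (auto simp: summand_decomp_def)
  have "h ` B = T"
    using gsubmodule_image[OF g_action.axioms(1)[OF W] h(1) summand_gsubmodule[OF B(1)]]
      simple_target h(2) B(2) \<open>h (y B) \<noteq> 0\<close> unfolding gsimple_def by blast
  then obtain v where v: "v \<in> B" "h v = u"
    using u(1) by blast
  have "{x\<in>B. h x = 0} = {0}"
    using gsubmodule_kernel[OF W h(1) summand_gsubmodule[OF B(1)]] simple[OF B(1)]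
      B(2) \<open>h (y B) \<noteq> 0\<close> unfolding gsimple_def by blast
  moreover have "act d v \<in> B" "h (act d v) = 0" for d
    using v summand_gsubmodule[OF B(1)] u(2) g_linear_act[OF h(1)]
    by (auto simp: gsubmodule_def invariants_def)
  ultimately have "v \<in> invariants act"
    by (auto simp: invariants_def)
  then show ?thesis
    using that v(2) by blast
qed

end

lemma g_linear_into_invariant_span_eq_0:
  assumes V: "g_action scV actV" "gsemisimple scV actV"
    and W: "g_action scW actW" "gsemisimple scW actW"
    and k: "g_linear scV actV scW actW k" "\<forall>v\<in>invariants actV. k v = 0"
      "range k \<subseteq> module.span scW (invariants actW)"
  shows "k s = 0"
proof (rule ccontr)
  assume ks: "k s \<noteq> 0"
  obtain \<N> where "simple_decomposition scW actW \<N>"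
    using gsemisimple_simple_decomposition[OF W] .
  then interpret W: simple_decomposition scW actW \<N> .
  obtain T where T: "T \<in> \<N>" and ksT: "component \<N> T (k s) \<noteq> 0"
    using W.component_nonzero[OF ks] .
  let ?\<pi> = "component \<N> T"
  have \<pi>: "g_linear scW actW scW actW ?\<pi>"
    using W.g_linear_component .
  obtain w where w: "w \<in> invariants actW" "?\<pi> w \<noteq> 0"
    using W.g_linear_vanishes_on_span[OF W.module_axioms \<pi>, of "invariants actW" "k s"] k(3) ksT
    by blast
  have "?\<pi> w \<in> invariants actW"
    using w(1) g_linear_act[OF \<pi>, symmetric] g_linear_zero[OF \<pi>] by (simp add: invariants_def)
  obtain \<P> where "simple_decomposition scV actV \<P>"
    using gsemisimple_simple_decomposition[OF V] .
  then interpret V: simple_decomposition scV actV \<P> .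
  obtain v where "v \<in> invariants actV" "?\<pi> (k v) = ?\<pi> w"
    using V.invariant_lift[OF W(1) W.simple[OF T] g_linear_comp[OF k(1) \<pi>], of s "?\<pi> w"]
      W.component_mem[OF T] ksT \<open>?\<pi> w \<in> invariants actW\<close> by auto
  then show False
    using k(2) w(2) g_linear_zero[OF \<pi>] by simp
qed

lemma g_action_gmodule: "gmodule \<iota> sm br al sc act \<Longrightarrow> g_action sc act"
  by (simp add: gmodule_def g_action_def g_action_axioms_def)

lemma gsubmodule_span_invariants_gmodule:
  assumes "gmodule \<iota> sm br al sc act"
  shows "gsubmodule sc act (module.span sc (invariants act))"
  using g_action.gsubmodule_span_invariants[OF g_action_gmodule[OF assms]] assms
  by (simp add: gmodule_def)

text \<open>Multiplication by an invariant element is g-linear because the action on M is a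
  derivation relative to the action on S.\<close>

lemma g_linear_scale_invariant:
  assumes "graded_Sg_module \<iota> sm br al j Sg \<phi> smM Mg \<rho>" "m \<in> invariants \<rho>"
  shows "g_linear (\<lambda>a s. j a * s) \<phi> (\<lambda>a x. smM (j a) x) \<rho> (\<lambda>s. smM s m)"
proof -
  have "module smM" and "\<forall>d s x. \<rho> d (smM s x) = smM (\<phi> d s) x + smM s (\<rho> d x)"
    using assms(1) by (simp_all add: graded_Sg_module_def)
  then show ?thesis
    using assms(2) module.scale_left_distrib module.scale_scale module.scale_zero_right
    by (fastforce simp: g_linear_def invariants_def)
qed

theorem mainTheorem3:
  fixes \<iota> :: "'k::comm_ring_1 \<Rightarrow> 'a::comm_ring_1"
    and sm :: "'a \<Rightarrow> 'g::ab_group_add \<Rightarrow> 'g" and br :: "'g \<Rightarrow> 'g \<Rightarrow> 'g" and al :: "'g \<Rightarrow> 'a \<Rightarrow> 'a"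
    and j :: "'a \<Rightarrow> 's::comm_ring_1" and Sg :: "nat \<Rightarrow> 's set" and \<phi> :: "'g \<Rightarrow> 's \<Rightarrow> 's"
    and smM :: "'s \<Rightarrow> 'm::ab_group_add \<Rightarrow> 'm" and Mg :: "int \<Rightarrow> 'm set" and \<rho> :: "'g \<Rightarrow> 'm \<Rightarrow> 'm"
    and Q :: "'s set" and M1 :: "'m set"
  assumes LA: "lie_algebroid \<iota> sm br al"
    and S_alg: "graded_galgebra \<iota> sm br al j Sg \<phi>"
    and S_noeth: "noetherian_subring (UNIV :: 's set)"
    and S_ss: "gsemisimple (\<lambda>a s. j a * s) \<phi>"
    and S0_noeth: "noetherian_subring (invariants \<phi> \<inter> Sg 0)"
    and M_mod: "graded_Sg_module \<iota> sm br al j Sg \<phi> smM Mg \<rho>"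
    and M_fin: "\<exists>G. finite G \<and> module.span smM G = UNIV"
    and M_ss: "gsemisimple (\<lambda>a m. smM (j a) m) \<rho>"
    and Q_sub: "gsubmodule (\<lambda>a s. j a * s) \<phi> Q"
    and S_dec: "module.span (\<lambda>a s. j a * s) (invariants \<phi>) \<inter> Q = {0}"
               "\<forall>s. \<exists>x\<in>module.span (\<lambda>a s. j a * s) (invariants \<phi>). \<exists>q\<in>Q. s = x + q"
    and M1_sub: "gsubmodule (\<lambda>a m. smM (j a) m) \<rho> M1"
    and M_dec: "module.span (\<lambda>a m. smM (j a) m) (invariants \<rho>) \<inter> M1 = {0}"
               "\<forall>m. \<exists>x\<in>module.span (\<lambda>a m. smM (j a) m) (invariants \<rho>). \<exists>y\<in>M1. m = x + y"
  shows "\<forall>q\<in>Q. \<forall>m\<in>invariants \<rho>. smM q m \<in> M1"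
proof (intro ballI)
  fix q m assume q: "q \<in> Q" and m: "m \<in> invariants \<rho>"
  let ?scS = "\<lambda>a s. j a * s" and ?scM = "\<lambda>a x. smM (j a) x"
  have gS: "gmodule \<iota> sm br al ?scS \<phi>" and gM: "gmodule \<iota> sm br al ?scM \<rho>"
    using S_alg M_mod by (simp_all add: graded_galgebra_def graded_Sg_module_def)
  interpret S: g_action ?scS \<phi>
    using g_action_gmodule[OF gS] .
  interpret M: g_action ?scM \<rho>
    using g_action_gmodule[OF gM] .
  let ?US = "S.span (invariants \<phi>)" and ?UM = "M.span (invariants \<rho>)"
  have S_dir: "Q \<inter> ?US = {0}" "\<forall>s. \<exists>x\<in>Q. \<exists>y\<in>?US. s = x + y"
    using S_dec by (blast, metis add.commute)
  have pQ: "g_linear ?scS \<phi> ?scS \<phi> (proj Q ?US)"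
    using S.g_linear_proj[OF Q_sub gsubmodule_span_invariants_gmodule[OF gS] S_dir] .
  have p: "g_linear ?scM \<rho> ?scM \<rho> (proj ?UM M1)"
    using M.g_linear_proj[OF gsubmodule_span_invariants_gmodule[OF gM] M1_sub M_dec] .
  have sQ: "S.subspace Q"
    using Q_sub by (simp add: gsubmodule_def)
  have mult: "g_linear ?scS \<phi> ?scM \<rho> (\<lambda>s. smM s m)"
    using g_linear_scale_invariant[OF M_mod m] .
  define k where "k = proj ?UM M1 \<circ> ((\<lambda>s. smM s m) \<circ> proj Q ?US)"
  have "k q = 0"
  proof (rule g_linear_into_invariant_span_eq_0[of ?scS \<phi> ?scM \<rho>])
    show "g_linear ?scS \<phi> ?scM \<rho> k"
      unfolding k_def using g_linear_comp[OF g_linear_comp[OF pQ mult] p] .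
    show "\<forall>v\<in>invariants \<phi>. k v = 0"
      using S.proj_complement[OF sQ S.subspace_span S_dir(1)] S.span_base g_linear_zero[OF p]
        g_linear_zero[OF mult] by (simp add: k_def)
    show "range k \<subseteq> ?UM"
      using proj_mem(1)[OF M_dec(2)] by (auto simp: k_def)
  qed (use S.g_action_axioms M.g_action_axioms S_ss M_ss in simp_all)
  then show "smM q m \<in> M1"
    using proj_mem(2)[OF M_dec(2), of "smM q m"] S.proj_self[OF sQ S.subspace_span S_dir(1) q]
    by (simp add: k_def)
qed

end
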